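(* For every $t\in\mathbb{N}$ and $C>0$ there is $\varepsilon_0>0$ such that the following holds for every integer $m\ge 3$. If $0<\varepsilon<\varepsilon_0$ and $\mathcal{G},\mathcal{H}\subset[m]^n$ satisfy $\mu(\mathcal{H})=m^{-t}\varepsilon$ and $\mu(\mathcal{G})>1-C\varepsilon$, then ${\sf agr}(x,y)=0$ for some $x\in\mathcal{G}$ and $y\in\mathcal{H}$.
   Context: $[m]=\{1,\dots,m\}$, $\mu$ is the uniform probability measure on $[m]^n$, and ${\sf agr}(x,y)=|\{i\in[n]:x_i=y_i\}|$. *)

theory Defs
  imports Main Complex_Main
begin

definition cube :: "nat \<Rightarrow> nat \<Rightarrow> nat list set" where
  "cube m n = {x. length x = n \<and> set x \<subseteq> {1..m}}"

definition mu :: "nat \<Rightarrow> nat \<Rightarrow> nat list set \<Rightarrow> real" where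
  "mu m n A = real (card A) / real m ^ n"

definition agr :: "nat list \<Rightarrow> nat list \<Rightarrow> nat" where
  "agr x y = card {i. i < length x \<and> i < length y \<and> x ! i = y ! i}"

end

theory Submission
  imports Defs "HOL-Analysis.Convex"
begin

(* Write N(A) for the set of points of [m]^n that disagree in every coordinate with some point
   of A.  The heart of the proof is the expansion estimate mu(N(A)) >= mu(A)^(1/(m-1)), proved by
   induction on n: splitting on the first coordinate, the slice of N(A) at b contains N of the
   slice of A at any a different from b, so with the two largest slices of A the inequality
   reduces to an elementary one about real powers.  For mu(H) = eps/m^t and eps small,
   mu(H)^(1/(m-1)) >= sqrt eps / 2^t exceeds C eps, so N(H) cannot fit into the complement of G,
   whose measure is below C eps. *)

definition disagree_set :: "nat \<Rightarrow> nat \<Rightarrow> nat list set \<Rightarrow> nat list set" where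
  "disagree_set m n A = {x \<in> cube m n. \<exists>y\<in>A. agr x y = 0}"

definition slice :: "nat \<Rightarrow> nat list set \<Rightarrow> nat list set" where
  "slice b S = {x. b # x \<in> S}"

lemma powr_le_1_plus_mult_diff:
  fixes y \<beta> :: real
  assumes "0 \<le> y" "0 \<le> \<beta>" "\<beta> \<le> 1"
  shows "y powr \<beta> \<le> 1 + \<beta> * (y - 1)"
proof (cases "y = 0")
  case False
  then have "y powr \<beta> * 1 powr (1 - \<beta>) \<le> \<beta> * y + (1 - \<beta>) * 1"
    using assms by (intro Youngs_inequality_0) auto
  then show ?thesis by (simp add: algebra_simps)
qed (use assms in simp)

lemma powr_mean_le_swapped_mean_powr:
  fixes M s k :: real
  assumes "1 \<le> k" "0 \<le> s" "s \<le> M"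
  shows "((M + k * s) / (k + 1)) powr (1 / k) \<le> (k * M powr (1 / k) + s powr (1 / k)) / (k + 1)"
proof (cases "M = 0")
  case False
  then have M: "0 < M" using assms by simp
  have k: "0 < k" "0 < k + 1" using assms by auto
  define r where "r = s / M"
  have r: "0 \<le> r" "r \<le> 1" "s = M * r" using assms M by (auto simp: r_def)
  have "((M + k * s) / (k + 1)) powr (1 / k) = M powr (1 / k) * ((1 + k * r) / (k + 1)) powr (1 / k)"
    using M r assms by (simp add: powr_mult[symmetric] algebra_simps add_divide_distrib)
  also have "((1 + k * r) / (k + 1)) powr (1 / k) \<le> 1 + (1 / k) * ((1 + k * r) / (k + 1) - 1)"
    using assms r by (intro powr_le_1_plus_mult_diff) auto
  also have "\<dots> = (k + r) / (k + 1)"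
    using k by (simp add: divide_simps) (simp add: algebra_simps)
  also have "\<dots> \<le> (k + r powr (1 / k)) / (k + 1)"
    using powr_mono'[of "1 / k" 1 r] r assms by (intro divide_right_mono) auto
  finally have "((M + k * s) / (k + 1)) powr (1 / k) \<le> M powr (1 / k) * ((k + r powr (1 / k)) / (k + 1))"
    using M by (simp add: mult_left_mono)
  also have "\<dots> = (k * M powr (1 / k) + s powr (1 / k)) / (k + 1)"
    using M r by (simp add: powr_mult field_simps)
  finally show ?thesis .
qed (use assms in simp)

lemma mean_powr_le_mean_of_dominating:
  fixes f g :: "'a \<Rightarrow> real" and k :: real
  assumes I: "finite I" "real (card I) = k + 1" and k: "1 \<le> k"
    and f_nonneg: "\<And>i. i \<in> I \<Longrightarrow> 0 \<le> f i"
    and dominating: "\<And>a b. a \<in> I \<Longrightarrow> b \<in> I \<Longrightarrow> a \<noteq> b \<Longrightarrow> f a powr (1 / k) \<le> g b"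
  shows "(sum f I / (k + 1)) powr (1 / k) \<le> sum g I / (k + 1)"
proof -
  have ex_max: "\<exists>a\<in>J. \<forall>b\<in>J. f b \<le> f a" if "finite J" "J \<noteq> {}" for J
  proof -
    have "Max (f ` J) \<in> f ` J" using that by simp
    then obtain a where "a \<in> J" "f a = Max (f ` J)" by auto
    then show ?thesis using that by (metis Max_ge finite_imageI image_eqI)
  qed
  have "I \<noteq> {}" using I k by auto
  then obtain a1 where a1: "a1 \<in> I" "\<And>b. b \<in> I \<Longrightarrow> f b \<le> f a1"
    using ex_max[OF I(1)] by blast
  define J where "J = I - {a1}"
  have "finite J" using I by (simp add: J_def)
  have card_J: "real (card J) = k"
    using I a1 card_gt_0_iff[of I] by (auto simp: J_def of_nat_diff)
  then have "J \<noteq> {}" using k by auto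
  then obtain a2 where a2: "a2 \<in> J" "\<And>b. b \<in> J \<Longrightarrow> f b \<le> f a2"
    using ex_max[OF \<open>finite J\<close>] by blast
  have I_split: "sum h I = h a1 + sum h J" for h :: "'a \<Rightarrow> real"
    using I a1 by (simp add: J_def sum.remove)
  have "sum f J \<le> k * f a2"
    using sum_mono[of J f "\<lambda>_. f a2"] a2 card_J by simp
  then have sum_f: "sum f I \<le> f a1 + k * f a2"
    by (simp add: I_split)
  have "\<forall>b\<in>J. f a1 powr (1 / k) \<le> g b"
    using dominating a1 by (auto simp: J_def)
  then have "k * f a1 powr (1 / k) \<le> sum g J"
    using sum_mono[of J "\<lambda>_. f a1 powr (1 / k)" g] card_J by simp
  moreover have "f a2 powr (1 / k) \<le> g a1"
    using dominating a1 a2 by (auto simp: J_def)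
  ultimately have sum_g: "k * f a1 powr (1 / k) + f a2 powr (1 / k) \<le> sum g I"
    by (simp add: I_split)
  have a2_le_a1: "0 \<le> f a2" "f a2 \<le> f a1"
    using a1 a2 f_nonneg by (auto simp: J_def)
  have "(sum f I / (k + 1)) powr (1 / k) \<le> ((f a1 + k * f a2) / (k + 1)) powr (1 / k)"
    using sum_f k f_nonneg by (intro powr_mono2 divide_right_mono divide_nonneg_pos sum_nonneg) auto
  also have "\<dots> \<le> (k * f a1 powr (1 / k) + f a2 powr (1 / k)) / (k + 1)"
    using powr_mean_le_swapped_mean_powr[OF k a2_le_a1] .
  also have "\<dots> \<le> sum g I / (k + 1)"
    using sum_g k by (intro divide_right_mono) auto
  finally show ?thesis .
qed

lemma finite_cube: "finite (cube m n)"
  using finite_lists_length_eq[of "{1..m}" n] by (simp add: cube_def conj_commute)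

lemma card_cube: "card (cube m n) = m ^ n"
  using card_lists_length_eq[of "{1..m}" n] by (simp add: cube_def conj_commute)

lemma agr_eq_0_iff: "agr x y = 0 \<longleftrightarrow> (\<forall>i < min (length x) (length y). x ! i \<noteq> y ! i)"
  unfolding agr_def by auto

lemma agr_Cons_Cons_eq_0: "a \<noteq> b \<Longrightarrow> agr x y = 0 \<Longrightarrow> agr (a # x) (b # y) = 0"
  unfolding agr_eq_0_iff by (auto simp: nth_Cons split: nat.splits)

lemma slice_subset_cube: "S \<subseteq> cube m (Suc n) \<Longrightarrow> slice b S \<subseteq> cube m n"
  unfolding slice_def cube_def by (fastforce dest: subsetD)

lemma card_eq_sum_card_slice:
  assumes "S \<subseteq> cube m (Suc n)"
  shows "card S = (\<Sum>b = 1..m. card (slice b S))"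
proof -
  have "finite S" using assms finite_cube finite_subset by blast
  have "S = (\<Union>b \<in> {1..m}. Cons b ` slice b S)"
  proof (intro equalityI subsetI)
    fix x assume "x \<in> S"
    moreover from this obtain b xs where "x = b # xs" "b \<in> {1..m}"
      using assms by (cases x) (auto simp: cube_def)
    ultimately show "x \<in> (\<Union>b \<in> {1..m}. Cons b ` slice b S)"
      by (auto simp: slice_def)
  qed (auto simp: slice_def)
  also have "card \<dots> = (\<Sum>b = 1..m. card (Cons b ` slice b S))"
    using \<open>finite S\<close> by (intro card_UN_disjoint) (auto simp: slice_def intro: finite_subset[of _ S])
  also have "\<dots> = (\<Sum>b = 1..m. card (slice b S))"
    by (intro sum.cong refl card_image) auto
  finally show ?thesis .
qed

lemma mu_eq_sum_mu_slice:
  assumes "S \<subseteq> cube m (Suc n)"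
  shows "mu m (Suc n) S = (\<Sum>b = 1..m. mu m n (slice b S)) / real m"
  unfolding mu_def card_eq_sum_card_slice[OF assms]
  by (simp add: sum_divide_distrib[symmetric] field_simps)

lemma mu_mono: "B \<subseteq> cube m n \<Longrightarrow> A \<subseteq> B \<Longrightarrow> mu m n A \<le> mu m n B"
  unfolding mu_def
  by (intro divide_right_mono) (auto intro: card_mono finite_subset[OF _ finite_cube])

lemma mu_add_le_1_if_disjoint:
  assumes "A \<subseteq> cube m n" "B \<subseteq> cube m n" "A \<inter> B = {}"
  shows "mu m n A + mu m n B \<le> 1"
proof -
  have "finite A" "finite B" using assms finite_cube finite_subset by blast+
  then have "card A + card B \<le> m ^ n"
    using assms card_mono[OF finite_cube, of "A \<union> B" m n]
    by (simp add: card_Un_disjoint card_cube)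
  then have "real (card A) + real (card B) \<le> real m ^ n"
    by (metis of_nat_add of_nat_le_iff of_nat_power)
  then show ?thesis
    unfolding mu_def by (cases "m = 0") (auto simp: add_divide_distrib[symmetric] divide_le_eq_1)
qed

lemma slice_disagree_set_subset:
  assumes "a \<noteq> b" "b \<in> {1..m}"
  shows "disagree_set m n (slice a A) \<subseteq> slice b (disagree_set m (Suc n) A)"
proof
  fix x assume "x \<in> disagree_set m n (slice a A)"
  then obtain y where "x \<in> cube m n" "a # y \<in> A" "agr x y = 0"
    unfolding disagree_set_def slice_def by auto
  then show "x \<in> slice b (disagree_set m (Suc n) A)"
    using assms agr_Cons_Cons_eq_0[of b a x y] unfolding disagree_set_def slice_def cube_def
    by (auto intro!: bexI[of _ "a # y"])
qed

lemma mu_disagree_set_ge_powr: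
  assumes m: "2 \<le> m" and "A \<subseteq> cube m n"
  shows "mu m n A powr (1 / (real m - 1)) \<le> mu m n (disagree_set m n A)"
  using assms(2)
proof (induction n arbitrary: A)
  case 0
  have cube_0: "cube m 0 = {[]}" by (auto simp: cube_def)
  then have "A = {} \<or> A = {[]}" using "0" by (simp add: subset_singleton_iff)
  moreover have "disagree_set m 0 {[]} = {[]}" by (simp add: cube_0 disagree_set_def agr_def)
  ultimately show ?case by (elim disjE) (simp_all add: mu_def)
next
  case (Suc n)
  define k where "k = real m - 1"
  have N: "disagree_set m (Suc n) A \<subseteq> cube m (Suc n)" by (auto simp: disagree_set_def)
  have "((\<Sum>b = 1..m. mu m n (slice b A)) / (k + 1)) powr (1 / k)
    \<le> (\<Sum>b = 1..m. mu m n (slice b (disagree_set m (Suc n) A))) / (k + 1)"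
  proof (rule mean_powr_le_mean_of_dominating)
    show "real (card {1..m}) = k + 1" by (simp add: k_def)
    show "1 \<le> k" using m by (simp add: k_def)
    show "0 \<le> mu m n (slice b A)" for b by (simp add: mu_def)
  next
    fix a b assume "a \<in> {1..m}" "b \<in> {1..m}" "a \<noteq> b"
    then have "mu m n (disagree_set m n (slice a A)) \<le> mu m n (slice b (disagree_set m (Suc n) A))"
      by (intro mu_mono slice_subset_cube N slice_disagree_set_subset)
    with Suc.IH[OF slice_subset_cube[OF Suc.prems]]
    show "mu m n (slice a A) powr (1 / k) \<le> mu m n (slice b (disagree_set m (Suc n) A))"
      unfolding k_def by (meson order_trans)
  qed simp
  then show ?case
    by (simp add: k_def mu_eq_sum_mu_slice[OF Suc.prems] mu_eq_sum_mu_slice[OF N])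
qed

lemma real_powr_inverse_pred_le_2:
  assumes "2 \<le> m"
  shows "real m powr (1 / (real m - 1)) \<le> 2"
proof -
  have "m \<le> 2 ^ (m - 1)"
    using Suc_leI[OF less_exp[of "m - 1"]] assms by simp
  moreover have "(2::real) powr (real m - 1) = 2 ^ (m - 1)"
    using assms by (simp add: powr_realpow[symmetric] of_nat_diff)
  ultimately have "real m \<le> 2 powr (real m - 1)"
    by (metis of_nat_le_iff of_nat_numeral of_nat_power)
  then have "real m powr (1 / (real m - 1)) \<le> (2 powr (real m - 1)) powr (1 / (real m - 1))"
    using assms by (intro powr_mono2) auto
  also have "\<dots> = 2" using assms by (simp add: powr_powr)
  finally show ?thesis .
qed

lemma mult_le_powr_inverse_pred_if_small:
  fixes C \<epsilon> :: real
  assumes m: "3 \<le> m" and "0 < C" "0 < \<epsilon>" "\<epsilon> < 1" and small: "C\<^sup>2 * 4 ^ t * \<epsilon> < 1"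
  shows "C * \<epsilon> \<le> (\<epsilon> / real m ^ t) powr (1 / (real m - 1))"
proof -
  define \<beta> where "\<beta> = 1 / (real m - 1)"
  have \<beta>: "0 < \<beta>" "\<beta> \<le> 1 / 2" using m by (auto simp: \<beta>_def field_simps)
  have "sqrt \<epsilon> \<le> \<epsilon> powr \<beta>"
    using assms \<beta> powr_mono'[of \<beta> "1 / 2" \<epsilon>] by (simp add: powr_half_sqrt)
  moreover have "(real m ^ t) powr \<beta> \<le> 2 ^ t"
  proof -
    have "(real m ^ t) powr \<beta> = (real m powr \<beta>) ^ t"
      using m by (simp add: powr_realpow[symmetric] powr_powr mult.commute)
    also have "\<dots> \<le> 2 ^ t"
      using real_powr_inverse_pred_le_2[of m] m by (intro power_mono) (auto simp: \<beta>_def)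
    finally show ?thesis .
  qed
  ultimately have root_bound: "sqrt \<epsilon> / 2 ^ t \<le> (\<epsilon> / real m ^ t) powr \<beta>"
    using assms m by (simp add: powr_divide frac_le)
  have "C * 2 ^ t * sqrt \<epsilon> < 1"
  proof (rule power2_less_imp_less)
    have "((2::real) ^ t)\<^sup>2 = 4 ^ t"
      by (simp add: power2_eq_square flip: power_mult_distrib)
    then show "(C * 2 ^ t * sqrt \<epsilon>)\<^sup>2 < 1\<^sup>2"
      using small assms by (simp add: power_mult_distrib)
  qed simp
  have "C * \<epsilon> = (C * 2 ^ t * sqrt \<epsilon>) * sqrt \<epsilon> / 2 ^ t"
    using assms by (simp add: field_simps)
  also have "\<dots> \<le> 1 * sqrt \<epsilon> / 2 ^ t"
    using \<open>C * 2 ^ t * sqrt \<epsilon> < 1\<close> assms by (intro divide_right_mono mult_right_mono) auto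
  also have "\<dots> \<le> (\<epsilon> / real m ^ t) powr (1 / (real m - 1))"
    using root_bound by (simp add: \<beta>_def)
  finally show ?thesis .
qed

theorem theorem2p3:
  fixes t :: nat and C :: real
  assumes "C > 0"
  shows "\<exists>\<epsilon>0 > 0. \<forall>m::nat. m \<ge> 3 \<longrightarrow> (\<forall>\<epsilon>::real. 0 < \<epsilon> \<and> \<epsilon> < \<epsilon>0 \<longrightarrow>
           (\<forall>n::nat. \<forall>G H. G \<subseteq> cube m n \<and> H \<subseteq> cube m n \<and>
              mu m n H = \<epsilon> / real m ^ t \<and> mu m n G > 1 - C * \<epsilon> \<longrightarrow>
              (\<exists>x\<in>G. \<exists>y\<in>H. agr x y = 0)))"
proof (intro exI[of _ "min 1 (1 / (C\<^sup>2 * 4 ^ t))"] conjI allI impI)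
  show "0 < min 1 (1 / (C\<^sup>2 * 4 ^ t))" using assms by simp
next
  fix m n :: nat and \<epsilon> :: real and G H
  assume m: "3 \<le> m" and \<epsilon>: "0 < \<epsilon> \<and> \<epsilon> < min 1 (1 / (C\<^sup>2 * 4 ^ t))"
    and GH: "G \<subseteq> cube m n \<and> H \<subseteq> cube m n \<and> mu m n H = \<epsilon> / real m ^ t \<and> mu m n G > 1 - C * \<epsilon>"
  have "C * \<epsilon> \<le> mu m n H powr (1 / (real m - 1))"
    using mult_le_powr_inverse_pred_if_small[OF m assms, of \<epsilon> t] \<epsilon> GH assms
    by (simp add: field_simps)
  also have "\<dots> \<le> mu m n (disagree_set m n H)"
    using mu_disagree_set_ge_powr[of m H n] m GH by simp
  finally have "1 < mu m n G + mu m n (disagree_set m n H)"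
    using GH by linarith
  then have "G \<inter> disagree_set m n H \<noteq> {}"
    using mu_add_le_1_if_disjoint[of G m n "disagree_set m n H"] GH
    by (auto simp: disagree_set_def)
  then show "\<exists>x\<in>G. \<exists>y\<in>H. agr x y = 0"
    by (auto simp: disagree_set_def)
qed

end
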